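(* Let $0\le q\in L_1^{loc}(\mathbb{R})$ and $p\in[1,\infty)$, and suppose the equation $-y'(x)+q(x)y(x)=f(x)$, $x\in\mathbb{R}$, is correctly solvable in $L_p(\mathbb{R})$. For $x\in\mathbb{R}$ let $d(x)=\inf\{d>0:\int_{x-d}^{x+d}q(t)\,dt=2\}$. Then $d_0:=\sup_{x\in\mathbb{R}}d(x)<\infty$.
   Context: A solution is an absolutely continuous function satisfying the equation a.e. The equation is correctly solvable in $L_p(\mathbb{R})$ if for every $f\in L_p(\mathbb{R})$ there is a unique solution $y\in L_p(\mathbb{R})$, and there is a constant $c(p)\in(0,\infty)$ with $\|y\|_p\le c(p)\|f\|_p$ for all $f\in L_p(\mathbb{R})$. (Under these hypotheses $\int_{\mathbb{R}}q=\infty$, so $d(x)$ is well defined and finite.) *)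

theory Defs
  imports "HOL-Analysis.Analysis"
begin

definition abs_cont_on :: "real \<Rightarrow> real \<Rightarrow> (real \<Rightarrow> real) \<Rightarrow> bool" where
  "abs_cont_on lo hi g \<longleftrightarrow>
     (\<forall>\<epsilon>>0. \<exists>\<delta>>0. \<forall>(n::nat) (a::nat \<Rightarrow> real) (b::nat \<Rightarrow> real).
        (\<forall>i<n. lo \<le> a i \<and> a i \<le> b i \<and> b i \<le> hi) \<and>
        (\<forall>i<n. \<forall>j<n. i \<noteq> j \<longrightarrow> b i \<le> a j \<or> b j \<le> a i) \<and>
        (\<Sum>i<n. b i - a i) < \<delta>
        \<longrightarrow> (\<Sum>i<n. \<bar>g (b i) - g (a i)\<bar>) < \<epsilon>)"

definition abs_cont_real :: "(real \<Rightarrow> real) \<Rightarrow> bool" where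
  "abs_cont_real g \<longleftrightarrow> (\<forall>lo hi. abs_cont_on lo hi g)"

definition in_Lp :: "real \<Rightarrow> (real \<Rightarrow> real) \<Rightarrow> bool" where
  "in_Lp p g \<longleftrightarrow> g \<in> borel_measurable lebesgue \<and> integrable lebesgue (\<lambda>x. \<bar>g x\<bar> powr p)"

definition Lp_norm :: "real \<Rightarrow> (real \<Rightarrow> real) \<Rightarrow> real" where
  "Lp_norm p g = (\<integral>x. \<bar>g x\<bar> powr p \<partial>lebesgue) powr (1 / p)"

definition is_solution :: "(real \<Rightarrow> real) \<Rightarrow> (real \<Rightarrow> real) \<Rightarrow> (real \<Rightarrow> real) \<Rightarrow> bool" where
  "is_solution q f y \<longleftrightarrow> abs_cont_real y \<and>
     (AE x in lebesgue. \<exists>D. (y has_real_derivative D) (at x) \<and> - D + q x * y x = f x)"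

definition correctly_solvable :: "(real \<Rightarrow> real) \<Rightarrow> real \<Rightarrow> bool" where
  "correctly_solvable q p \<longleftrightarrow>
     (\<forall>f. in_Lp p f \<longrightarrow> (\<exists>!y. is_solution q f y \<and> in_Lp p y)) \<and>
     (\<exists>c>0. \<forall>f y. in_Lp p f \<and> is_solution q f y \<and> in_Lp p y \<longrightarrow> Lp_norm p y \<le> c * Lp_norm p f)"

definition d_fun :: "(real \<Rightarrow> real) \<Rightarrow> real \<Rightarrow> real" where
  "d_fun q x = Inf {d. d > 0 \<and> (\<integral>t\<in>{x-d..x+d}. q t \<partial>lebesgue) = 2}"

end

theory Submission
  imports Defs
begin

(*
  If d(x) > r, the intermediate value theorem applied to  d |-> integral of q over [x-d, x+d]
  shows that q has mass at most 2 on the window [x-r, x+r].  On such a window let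
  G(t) = integral of q over [x-r, t] (clamped to the window) and let phi be the hat function of
  height 1 supported on the window.  Then y = phi * exp G solves  -y' + q y = f  with
  f = -phi' * exp G, and 1 <= exp G <= e^2.  Hence |f| <= e^2/r on the window while y >= 1/2 on
  its middle half, so  ||y||_p >= r^(1/p) / 2  and  ||f||_p <= e^2 (2r)^(1/p) / r.  The a priori
  estimate ||y||_p <= c ||f||_p then forces r <= 4 c e^2, so d is bounded by 4 c e^2.
  That y is a solution rests on the absolute continuity of the indefinite integral and on
  Lebesgue's differentiation theorem.
*)

lemma integrable_imp_set_integrable:
  fixes f :: "'a \<Rightarrow> 'b::{banach, second_countable_topology}"
  shows "integrable M f \<Longrightarrow> A \<in> sets M \<Longrightarrow> set_integrable M A f"
  unfolding set_integrable_def by (rule integrable_mult_indicator)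

lemma integral_truncation_tendsto_0:
  fixes h :: "'a \<Rightarrow> real"
  assumes h: "integrable M h"
  shows "(\<lambda>n::nat. \<integral>x. h x - min (h x) (real n) \<partial>M) \<longlonglongrightarrow> 0"
proof -
  have "(\<lambda>n::nat. \<integral>x. h x - min (h x) (real n) \<partial>M) \<longlonglongrightarrow> (\<integral>x. 0 \<partial>M)"
  proof (rule integral_dominated_convergence[where w = "\<lambda>x. \<bar>h x\<bar>"])
    show "AE x in M. (\<lambda>n. h x - min (h x) (real n)) \<longlonglongrightarrow> 0"
    proof (rule AE_I2, rule tendsto_eventually)
      fix x
      show "\<forall>\<^sub>F n in sequentially. h x - min (h x) (real n) = 0"
        using eventually_ge_at_top[of "nat \<lceil>h x\<rceil>"] by eventually_elim linarith
    qed
  qed (use h in \<open>auto simp: min_def\<close>)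
  then show ?thesis by simp
qed

lemma integrable_absolutely_continuous:
  fixes g :: "'a \<Rightarrow> real"
  assumes g: "integrable M g" and e: "e > 0"
  obtains \<delta> where "\<delta> > 0"
    "\<And>A. A \<in> fmeasurable M \<Longrightarrow> measure M A < \<delta> \<Longrightarrow> (\<integral>x\<in>A. \<bar>g x\<bar> \<partial>M) < e"
proof -
  let ?h = "\<lambda>x. \<bar>g x\<bar>"
  have h: "integrable M ?h" using g by simp
  obtain n :: nat where n: "(\<integral>x. ?h x - min (?h x) (real n) \<partial>M) < e / 2"
    using order_tendstoD(2)[OF integral_truncation_tendsto_0[OF h], of "e / 2"] e
    by (auto simp: eventually_sequentially)
  have tail: "integrable M (\<lambda>x. ?h x - min (?h x) (real n))"
    by (rule Bochner_Integration.integrable_bound[OF h]) (use h in \<open>auto simp: min_def\<close>)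
  define \<delta> where "\<delta> = e / (2 * (real n + 1))"
  show thesis
  proof (rule that)
    show "\<delta> > 0" using e by (simp add: \<delta>_def)
    fix A assume A: "A \<in> fmeasurable M" and small: "measure M A < \<delta>"
    have "(\<integral>x\<in>A. ?h x \<partial>M) \<le> (\<integral>x. (?h x - min (?h x) (real n)) + real n * indicator A x \<partial>M)"
      unfolding set_lebesgue_integral_def
      using A h tail
      by (intro integral_mono integrable_mult_indicator Bochner_Integration.integrable_add)
        (auto simp: fmeasurable_def split: split_indicator)
    also have "\<dots> = (\<integral>x. ?h x - min (?h x) (real n) \<partial>M) + real n * measure M A"
      using A tail by (simp add: fmeasurable_def)
    also have "\<dots> < e / 2 + real n * \<delta>"
      using n small by (intro add_less_le_mono mult_left_mono) auto
    also have "\<dots> \<le> e"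
      using e by (simp add: \<delta>_def field_simps)
    finally show "(\<integral>x\<in>A. ?h x \<partial>M) < e" .
  qed
qed

definition small_packing :: "real \<Rightarrow> real \<Rightarrow> real \<Rightarrow> nat \<Rightarrow> (nat \<Rightarrow> real) \<Rightarrow> (nat \<Rightarrow> real) \<Rightarrow> bool" where
  "small_packing lo hi \<delta> n a b \<longleftrightarrow>
     (\<forall>i<n. lo \<le> a i \<and> a i \<le> b i \<and> b i \<le> hi) \<and>
     (\<forall>i<n. \<forall>j<n. i \<noteq> j \<longrightarrow> b i \<le> a j \<or> b j \<le> a i) \<and>
     (\<Sum>i<n. b i - a i) < \<delta>"

lemma abs_cont_on_iff_small_packing:
  "abs_cont_on lo hi g \<longleftrightarrow>
     (\<forall>e>0. \<exists>\<delta>>0. \<forall>n a b. small_packing lo hi \<delta> n a b \<longrightarrow> (\<Sum>i<n. \<bar>g (b i) - g (a i)\<bar>) < e)"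
  unfolding abs_cont_on_def small_packing_def ..

lemma abs_cont_on_dominated:
  assumes F: "abs_cont_on lo hi F" and K: "0 \<le> K" and M: "0 \<le> M"
    and dom: "\<And>s t. lo \<le> s \<Longrightarrow> s \<le> t \<Longrightarrow> t \<le> hi \<Longrightarrow> \<bar>h t - h s\<bar> \<le> K * (t - s) + M * \<bar>F t - F s\<bar>"
  shows "abs_cont_on lo hi h"
  unfolding abs_cont_on_iff_small_packing
proof (intro allI impI)
  fix e :: real assume e: "e > 0"
  then have "e / (2 * (M + 1)) > 0" using M by simp
  then obtain \<delta>F where "\<delta>F > 0" and \<delta>F: "\<And>n a b. small_packing lo hi \<delta>F n a b \<Longrightarrow>
      (\<Sum>i<n. \<bar>F (b i) - F (a i)\<bar>) < e / (2 * (M + 1))"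
    using F unfolding abs_cont_on_iff_small_packing by meson
  define \<delta> where "\<delta> = min \<delta>F (e / (2 * (K + 1)))"
  have "(\<Sum>i<n. \<bar>h (b i) - h (a i)\<bar>) < e" if packing: "small_packing lo hi \<delta> n a b" for n a b
  proof -
    let ?L = "\<Sum>i<n. b i - a i"
    have "small_packing lo hi \<delta>F n a b" and "?L \<le> e / (2 * (K + 1))"
      using packing by (auto simp: small_packing_def \<delta>_def)
    have "(\<Sum>i<n. \<bar>h (b i) - h (a i)\<bar>) \<le> (\<Sum>i<n. K * (b i - a i) + M * \<bar>F (b i) - F (a i)\<bar>)"
      using packing by (intro sum_mono dom) (auto simp: small_packing_def)
    also have "\<dots> = K * ?L + M * (\<Sum>i<n. \<bar>F (b i) - F (a i)\<bar>)"
      by (simp add: sum.distrib sum_distrib_left)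
    also have "\<dots> \<le> K * (e / (2 * (K + 1))) + M * (e / (2 * (M + 1)))"
      using \<delta>F[OF \<open>small_packing lo hi \<delta>F n a b\<close>] \<open>?L \<le> e / (2 * (K + 1))\<close> K M
      by (intro add_mono mult_left_mono) auto
    also have "\<dots> < e / 2 + e / 2"
      using e K M by (intro add_strict_mono) (simp_all add: field_simps)
    finally show ?thesis by simp
  qed
  moreover have "\<delta> > 0" using \<open>\<delta>F > 0\<close> e K by (simp add: \<delta>_def)
  ultimately show "\<exists>\<delta>>0. \<forall>n a b. small_packing lo hi \<delta> n a b \<longrightarrow> (\<Sum>i<n. \<bar>h (b i) - h (a i)\<bar>) < e"
    by blast
qed

definition integral_upto :: "(real \<Rightarrow> real) \<Rightarrow> real \<Rightarrow> real" where
  "integral_upto g t = (\<integral>x\<in>{..<t}. g x \<partial>lebesgue)"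

lemma integral_upto_diff:
  assumes g: "integrable lebesgue g" and uv: "u \<le> v"
  shows "integral_upto g v - integral_upto g u = (\<integral>x\<in>{u..<v}. g x \<partial>lebesgue)"
proof -
  have "{..<v} = {..<u} \<union> {u..<v}" using uv by auto
  moreover have "(\<integral>x\<in>{..<u} \<union> {u..<v}. g x \<partial>lebesgue) =
      (\<integral>x\<in>{..<u}. g x \<partial>lebesgue) + (\<integral>x\<in>{u..<v}. g x \<partial>lebesgue)"
    by (rule set_integral_Un) (auto intro: integrable_imp_set_integrable[OF g])
  ultimately show ?thesis by (simp add: integral_upto_def)
qed

lemma integral_upto_diff_eq_integral:
  assumes g: "integrable lebesgue g" and uv: "u \<le> v"
  shows "integral_upto g v - integral_upto g u = integral {u..v} g"
proof -
  have "(\<integral>x\<in>{u..<v}. g x \<partial>lebesgue) = (\<integral>x\<in>{u..v}. g x \<partial>lebesgue)"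
    by (rule set_integral_discrete_difference[where X = "{v}"]) auto
  also have "\<dots> = integral {u..v} g"
    using g by (simp add: set_lebesgue_integral_eq_integral(2) integrable_imp_set_integrable)
  finally show ?thesis using integral_upto_diff[OF g uv] by simp
qed

lemma
  assumes g: "integrable lebesgue g" and nonneg: "\<And>x. 0 \<le> g x"
  shows integral_upto_mono: "mono (integral_upto g)"
    and integral_upto_nonneg: "0 \<le> integral_upto g t"
    and integral_upto_le_integral: "integral_upto g t \<le> (\<integral>x. g x \<partial>lebesgue)"
proof -
  show "mono (integral_upto g)"
  proof (rule monoI)
    fix u v :: real assume "u \<le> v"
    have "0 \<le> (\<integral>x\<in>{u..<v}. g x \<partial>lebesgue)"
      unfolding set_lebesgue_integral_def using nonneg
      by (intro Bochner_Integration.integral_nonneg) simp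
    then show "integral_upto g u \<le> integral_upto g v"
      using integral_upto_diff[OF g \<open>u \<le> v\<close>] by simp
  qed
  show "0 \<le> integral_upto g t"
    unfolding integral_upto_def set_lebesgue_integral_def using nonneg
    by (intro Bochner_Integration.integral_nonneg) simp
  show "integral_upto g t \<le> (\<integral>x. g x \<partial>lebesgue)"
    unfolding integral_upto_def set_lebesgue_integral_def
    using g nonneg by (intro integral_mono integrable_mult_indicator) (auto split: split_indicator)
qed

lemma sum_increments_integral_upto:
  fixes n :: nat and a b :: "nat \<Rightarrow> real"
  assumes g: "integrable lebesgue g" and nonneg: "\<And>x. 0 \<le> g x"
    and le: "\<And>i. i < n \<Longrightarrow> a i \<le> b i"
    and disj: "disjoint_family_on (\<lambda>i. {a i..<b i}) {..<n}"
  shows "(\<Sum>i<n. \<bar>integral_upto g (b i) - integral_upto g (a i)\<bar>) =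
    (\<integral>x\<in>(\<Union>i<n. {a i..<b i}). g x \<partial>lebesgue)"
proof -
  have "\<bar>integral_upto g (b i) - integral_upto g (a i)\<bar> = (\<integral>x\<in>{a i..<b i}. g x \<partial>lebesgue)"
    if "i < n" for i
  proof -
    have "integral_upto g (a i) \<le> integral_upto g (b i)"
      using monoD[OF integral_upto_mono[OF g nonneg] le[OF that]] .
    then show ?thesis using integral_upto_diff[OF g le[OF that]] by linarith
  qed
  then have "(\<Sum>i<n. \<bar>integral_upto g (b i) - integral_upto g (a i)\<bar>) =
      (\<Sum>i<n. \<integral>x\<in>{a i..<b i}. g x \<partial>lebesgue)"
    by simp
  also have "\<dots> = (\<integral>x\<in>(\<Union>i<n. {a i..<b i}). g x \<partial>lebesgue)"
    using g disj
    by (intro set_integral_finite_Union[symmetric]) (auto simp: integrable_imp_set_integrable)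
  finally show ?thesis .
qed

lemma abs_cont_on_integral_upto:
  assumes g: "integrable lebesgue g" and nonneg: "\<And>x. 0 \<le> g x"
  shows "abs_cont_on lo hi (integral_upto g)"
  unfolding abs_cont_on_iff_small_packing
proof (intro allI impI)
  fix e :: real assume "e > 0"
  then obtain \<delta> where "\<delta> > 0" and \<delta>: "\<And>A. A \<in> lmeasurable \<Longrightarrow> measure lebesgue A < \<delta> \<Longrightarrow>
      (\<integral>x\<in>A. \<bar>g x\<bar> \<partial>lebesgue) < e"
    using integrable_absolutely_continuous[OF g] by metis
  have "(\<Sum>i<n. \<bar>integral_upto g (b i) - integral_upto g (a i)\<bar>) < e"
    if packing: "small_packing lo hi \<delta> n a b" for n a b
  proof -
    define A where "A = (\<Union>i<n. {a i..<b i})"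
    have le: "\<And>i. i < n \<Longrightarrow> a i \<le> b i"
      using packing by (auto simp: small_packing_def)
    have disj: "disjoint_family_on (\<lambda>i. {a i..<b i}) {..<n}"
      using packing by (fastforce simp: small_packing_def disjoint_family_on_def)
    have A: "A \<in> lmeasurable"
      unfolding A_def by (intro fmeasurable.finite_UN bounded_set_imp_lmeasurable) auto
    have "measure lebesgue A \<le> (\<Sum>i<n. measure lebesgue {a i..<b i})"
      unfolding A_def by (intro measure_UNION_le) auto
    also have "\<dots> < \<delta>"
      using packing le by (simp add: small_packing_def)
    finally have "measure lebesgue A < \<delta>" .
    then have "(\<integral>x\<in>A. \<bar>g x\<bar> \<partial>lebesgue) < e" by (rule \<delta>[OF A])
    then show ?thesis
      using sum_increments_integral_upto[OF g nonneg le disj] nonneg by (simp add: A_def)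
  qed
  with \<open>\<delta> > 0\<close> show "\<exists>\<delta>>0. \<forall>n a b. small_packing lo hi \<delta> n a b \<longrightarrow>
      (\<Sum>i<n. \<bar>integral_upto g (b i) - integral_upto g (a i)\<bar>) < e"
    by blast
qed

lemma DERIV_from_one_sided_quotients:
  fixes f :: "real \<Rightarrow> real"
  assumes right: "((\<lambda>h. (f (x + h) - f x) / h) \<longlongrightarrow> D) (at_right 0)"
    and left: "((\<lambda>h. (f x - f (x - h)) / h) \<longlongrightarrow> D) (at_right 0)"
  shows "(f has_real_derivative D) (at x)"
proof -
  have "(\<lambda>h. (f (x + - h) - f x) / - h) = (\<lambda>h. (f x - f (x - h)) / h)"
    by (simp add: fun_eq_iff minus_divide_left)
  with left have "((\<lambda>h. (f (x + h) - f x) / h) \<longlongrightarrow> D) (at_left 0)"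
    by (simp add: filterlim_at_left_to_right)
  with right show ?thesis
    by (simp add: DERIV_def filterlim_at_split)
qed

lemma integral_right_quotient_tendsto:
  fixes g :: "real \<Rightarrow> real"
  assumes "\<And>a b. g integrable_on {a..b}"
  obtains N where "negligible N"
    "\<And>x. x \<notin> N \<Longrightarrow> ((\<lambda>h. integral {x..x+h} g / h) \<longlongrightarrow> g x) (at_right 0)"
proof -
  obtain N where "negligible N" and N: "\<And>x e. \<lbrakk>x \<notin> N; 0 < e\<rbrakk> \<Longrightarrow>
      \<exists>d>0. \<forall>h. 0 < h \<and> h < d \<longrightarrow>
        norm (integral (cbox x (x + h *\<^sub>R One)) g /\<^sub>R h ^ DIM(real) - g x) < e"
    using integrable_ccontinuous_explicit[of g] assms by (metis cbox_interval)
  have "((\<lambda>h. integral {x..x+h} g / h) \<longlongrightarrow> g x) (at_right 0)" if "x \<notin> N" for x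
    unfolding tendsto_iff eventually_at_right[OF zero_less_one]
  proof (intro allI impI)
    fix e :: real assume "e > 0"
    then have "\<exists>d>0. \<forall>h. 0 < h \<and> h < d \<longrightarrow> \<bar>integral {x..x+h} g / h - g x\<bar> < e"
      using N[OF that] by (simp add: divide_inverse mult.commute)
    then show "\<exists>b>0. \<forall>h>0. h < b \<longrightarrow> dist (integral {x..x+h} g / h) (g x) < e"
      by (force simp: dist_real_def)
  qed
  with \<open>negligible N\<close> show thesis by (rule that)
qed

lemma integral_left_quotient_tendsto:
  fixes g :: "real \<Rightarrow> real"
  assumes g: "\<And>a b. g integrable_on {a..b}"
  obtains N where "negligible N"
    "\<And>x. x \<notin> N \<Longrightarrow> ((\<lambda>h. integral {x-h..x} g / h) \<longlongrightarrow> g x) (at_right 0)"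
proof -
  have "(\<lambda>t. g (- t)) integrable_on {a..b}" for a b
    using g[of "-b" "-a"] Henstock_Kurzweil_Integration.integrable_reflect_real[of g "-a" "-b"]
    by simp
  then obtain N where "negligible N"
    and N: "\<And>x. x \<notin> N \<Longrightarrow>
      ((\<lambda>h. integral {x..x+h} (\<lambda>t. g (- t)) / h) \<longlongrightarrow> g (- x)) (at_right 0)"
    using integral_right_quotient_tendsto[of "\<lambda>t. g (- t)"] by blast
  have "negligible (uminus ` N)"
    using \<open>negligible N\<close>
    by (intro negligible_differentiable_image_negligible) (auto intro!: derivative_intros)
  moreover have "((\<lambda>h. integral {x-h..x} g / h) \<longlongrightarrow> g x) (at_right 0)"
    if "x \<notin> uminus ` N" for x
  proof -
    have "- x \<notin> N" using that by force
    moreover have "integral {-x..-x+h} (\<lambda>t. g (- t)) = integral {x-h..x} g" for h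
      using Henstock_Kurzweil_Integration.integral_reflect_real[of x "x - h" g] by simp
    ultimately show ?thesis using N[of "- x"] by simp
  qed
  ultimately show thesis by (rule that)
qed

theorem integral_upto_has_real_derivative_AE:
  assumes g: "integrable lebesgue g"
  shows "AE x in lebesgue. (integral_upto g has_real_derivative g x) (at x)"
proof -
  have int: "g integrable_on {a..b}" for a b
    using g by (simp add: set_lebesgue_integral_eq_integral(1) integrable_imp_set_integrable)
  obtain N1 where "negligible N1"
    and right: "\<And>x. x \<notin> N1 \<Longrightarrow> ((\<lambda>h. integral {x..x+h} g / h) \<longlongrightarrow> g x) (at_right 0)"
    using integral_right_quotient_tendsto[OF int] by blast
  obtain N2 where "negligible N2"
    and left: "\<And>x. x \<notin> N2 \<Longrightarrow> ((\<lambda>h. integral {x-h..x} g / h) \<longlongrightarrow> g x) (at_right 0)"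
    using integral_left_quotient_tendsto[OF int] by blast
  have "AE x in lebesgue. x \<notin> N1 \<union> N2"
    using \<open>negligible N1\<close> \<open>negligible N2\<close>
    by (intro AE_not_in) (simp add: negligible_iff_null_sets[symmetric])
  then show ?thesis
  proof eventually_elim
    case (elim x)
    have pos: "\<forall>\<^sub>F h in at_right 0. 0 < (h::real)"
      by (simp add: eventually_at_right_less)
    show ?case
    proof (rule DERIV_from_one_sided_quotients)
      have "\<forall>\<^sub>F h in at_right 0. integral {x..x+h} g / h = (integral_upto g (x + h) - integral_upto g x) / h"
        using pos by eventually_elim (simp add: integral_upto_diff_eq_integral[OF g])
      from tendsto_cong[THEN iffD1, OF this right] elim
      show "((\<lambda>h. (integral_upto g (x + h) - integral_upto g x) / h) \<longlongrightarrow> g x) (at_right 0)"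
        by simp
      have "\<forall>\<^sub>F h in at_right 0. integral {x-h..x} g / h = (integral_upto g x - integral_upto g (x - h)) / h"
        using pos by eventually_elim (simp add: integral_upto_diff_eq_integral[OF g])
      from tendsto_cong[THEN iffD1, OF this left] elim
      show "((\<lambda>h. (integral_upto g x - integral_upto g (x - h)) / h) \<longlongrightarrow> g x) (at_right 0)"
        by simp
    qed
  qed
qed

lemma
  fixes h :: "real \<Rightarrow> real"
  assumes p: "0 < p" and h: "h \<in> borel_measurable lebesgue" and S: "S \<in> lmeasurable" and M: "0 \<le> M"
    and bound: "\<And>x. \<bar>h x\<bar> \<le> M * indicator S x"
  shows in_Lp_bounded_support: "in_Lp p h"
    and Lp_norm_le_bounded_support: "Lp_norm p h \<le> M * measure lebesgue S powr (1 / p)"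
proof -
  have pw: "\<bar>h x\<bar> powr p \<le> M powr p * indicator S x" for x
    using bound[of x] p M by (cases "x \<in> S") (auto intro: powr_mono2)
  have int_M: "integrable lebesgue (\<lambda>x. M powr p * indicator S x)"
    using S by (auto simp: fmeasurable_def)
  have int: "integrable lebesgue (\<lambda>x. \<bar>h x\<bar> powr p)"
    by (rule Bochner_Integration.integrable_bound[OF int_M]) (use h pw in auto)
  then show "in_Lp p h" using h by (simp add: in_Lp_def)
  have "(\<integral>x. \<bar>h x\<bar> powr p \<partial>lebesgue) \<le> (\<integral>x. M powr p * indicator S x \<partial>lebesgue)"
    by (intro integral_mono int int_M pw)
  also have "\<dots> = M powr p * measure lebesgue S"
    using S by (simp add: fmeasurable_def)
  finally have "Lp_norm p h \<le> (M powr p * measure lebesgue S) powr (1 / p)"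
    unfolding Lp_norm_def using p by (intro powr_mono2) (auto intro: Bochner_Integration.integral_nonneg)
  also have "\<dots> = M * measure lebesgue S powr (1 / p)"
    using p M by (simp add: powr_mult powr_powr)
  finally show "Lp_norm p h \<le> M * measure lebesgue S powr (1 / p)" .
qed

lemma Lp_norm_ge_lower_bound:
  fixes h :: "real \<Rightarrow> real"
  assumes p: "0 < p" and h: "in_Lp p h" and S: "S \<in> lmeasurable" and m: "0 \<le> m"
    and lower: "\<And>x. x \<in> S \<Longrightarrow> m \<le> \<bar>h x\<bar>"
  shows "m * measure lebesgue S powr (1 / p) \<le> Lp_norm p h"
proof -
  have "m powr p * measure lebesgue S = (\<integral>x. m powr p * indicator S x \<partial>lebesgue)"
    using S by (simp add: fmeasurable_def)
  also have "\<dots> \<le> (\<integral>x. \<bar>h x\<bar> powr p \<partial>lebesgue)"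
    using S h lower m p by (intro integral_mono) (auto simp: in_Lp_def fmeasurable_def
        split: split_indicator intro: powr_mono2)
  finally have "(m powr p * measure lebesgue S) powr (1 / p) \<le> Lp_norm p h"
    unfolding Lp_norm_def using m p by (intro powr_mono2) auto
  then show ?thesis
    using p m by (simp add: powr_mult powr_powr)
qed

lemma continuous_on_integral_window:
  fixes g :: "real \<Rightarrow> real"
  assumes g: "\<And>a b. g integrable_on {a..b}"
  shows "continuous_on {0..r} (\<lambda>d. integral {x-d..x+d} g)"
proof -
  let ?H = "\<lambda>t. integral {x-r..t} g"
  have H: "continuous_on {x-r..x+r} ?H"
    by (rule indefinite_integral_continuous_1[OF g])
  have "continuous_on {0..r} (\<lambda>d. ?H (x + d) - ?H (x - d))"
    by (intro continuous_on_diff continuous_on_compose2[OF H] continuous_intros) auto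
  moreover have "?H (x + d) - ?H (x - d) = integral {x-d..x+d} g" if "d \<in> {0..r}" for d
    using Henstock_Kurzweil_Integration.integral_combine[of "x-r" "x-d" "x+d" g] that g by simp
  ultimately show ?thesis by (rule continuous_on_eq)
qed

lemma set_integral_window_le_2:
  fixes q :: "real \<Rightarrow> real"
  assumes q_loc: "\<And>a b. set_integrable lebesgue {a..b} q" and r: "0 < r" and less: "r < d_fun q x"
  shows "(\<integral>t\<in>{x-r..x+r}. q t \<partial>lebesgue) \<le> 2"
proof (rule ccontr)
  define F where "F d = integral {x-d..x+d} q" for d
  have F_eq: "(\<integral>t\<in>{x-d..x+d}. q t \<partial>lebesgue) = F d" for d
    using set_lebesgue_integral_eq_integral(2)[OF q_loc] by (simp add: F_def)
  have "continuous_on {0..r} F"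
    unfolding F_def using set_lebesgue_integral_eq_integral(1)[OF q_loc]
    by (rule continuous_on_integral_window)
  moreover assume "\<not> ?thesis"
  then have "2 \<le> F r" by (simp add: F_eq)
  moreover have "F 0 = 0" by (simp add: F_def)
  ultimately obtain d where d: "0 \<le> d" "d \<le> r" "F d = 2"
    using IVT'[of F 0 2 r] r by auto
  with \<open>F 0 = 0\<close> have "0 < d" by (cases "d = 0") auto
  with d have "d_fun q x \<le> d"
    unfolding d_fun_def by (intro cInf_lower bdd_belowI[of _ 0]) (auto simp: F_eq)
  with less d show False by simp
qed

lemma exp_diff_le_exp_mult:
  fixes s t :: real
  assumes "s \<le> t"
  shows "exp t - exp s \<le> exp t * (t - s)"
proof -
  have "exp t * (1 + (s - t)) \<le> exp t * exp (s - t)"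
    by (intro mult_left_mono exp_ge_add_one_self) simp
  then show ?thesis by (simp add: exp_diff algebra_simps)
qed

locale low_mass_window =
  fixes q :: "real \<Rightarrow> real" and c r :: real
  assumes q_loc: "\<And>a b. set_integrable lebesgue {a..b} q"
    and q_nonneg: "AE x in lebesgue. 0 \<le> q x"
    and r_pos: "0 < r"
    and mass: "(\<integral>t\<in>{c-r..c+r}. q t \<partial>lebesgue) \<le> 2"
begin

text \<open>Taking max 0 changes q only on a null set, since q is nonnegative a.e.\<close>
definition w :: "real \<Rightarrow> real" where
  "w x = indicator {c-r..c+r} x * max 0 (q x)"

abbreviation G :: "real \<Rightarrow> real" where
  "G \<equiv> integral_upto w"

definition hat :: "real \<Rightarrow> real" where
  "hat t = max 0 (1 - \<bar>t - c\<bar> / r)"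

definition y :: "real \<Rightarrow> real" where
  "y t = hat t * exp (G t)"

text \<open>This is -hat' * exp G away from the kinks c - r, c, c + r of hat.\<close>
definition f :: "real \<Rightarrow> real" where
  "f t = sgn (t - c) * indicator {c-r<..<c+r} t * exp (G t) / r"

lemma w_nonneg: "0 \<le> w x"
  by (simp add: w_def)

lemma w_integrable: "integrable lebesgue w"
proof -
  have "integrable lebesgue (\<lambda>x. max 0 (indicator {c-r..c+r} x * q x))"
    using q_loc[of "c-r" "c+r"] by (intro integrable_max) (auto simp: set_integrable_def)
  moreover have "(\<lambda>x. max 0 (indicator {c-r..c+r} x * q x)) = w"
    by (auto simp: fun_eq_iff w_def split: split_indicator)
  ultimately show ?thesis by simp
qed

lemma integral_w_le_2: "(\<integral>x. w x \<partial>lebesgue) \<le> 2"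
proof -
  have "(\<integral>x. w x \<partial>lebesgue) = (\<integral>t\<in>{c-r..c+r}. q t \<partial>lebesgue)"
    unfolding set_lebesgue_integral_def
  proof (rule integral_cong_AE)
    show "AE x in lebesgue. w x = indicator {c-r..c+r} x *\<^sub>R q x"
      using q_nonneg by eventually_elim (auto simp: w_def split: split_indicator)
  qed (use w_integrable q_loc[of "c-r" "c+r"] in \<open>auto simp: set_integrable_def\<close>)
  with mass show ?thesis by simp
qed

lemma exp_G_bounds: "1 \<le> exp (G t)" "exp (G t) \<le> exp 2"
  using integral_upto_nonneg[OF w_integrable w_nonneg, of t]
    integral_upto_le_integral[OF w_integrable w_nonneg, of t] integral_w_le_2
  by auto

lemma G_measurable [measurable]: "G \<in> borel_measurable borel"
  using borel_measurable_mono[OF integral_upto_mono[OF w_integrable w_nonneg]] .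

lemma hat_bounds: "0 \<le> hat t" "hat t \<le> 1"
  using r_pos by (auto simp: hat_def)

lemma hat_outside: "r \<le> \<bar>t - c\<bar> \<Longrightarrow> hat t = 0"
  using r_pos by (auto simp: hat_def field_simps)

lemma hat_Lipschitz: "\<bar>hat t - hat s\<bar> \<le> \<bar>t - s\<bar> / r"
proof -
  have max0_Lipschitz: "\<bar>max 0 a - max 0 b\<bar> \<le> \<bar>a - b\<bar>" for a b :: real
    by (simp add: max_def abs_if)
  have "\<bar>hat t - hat s\<bar> \<le> \<bar>(1 - \<bar>t - c\<bar> / r) - (1 - \<bar>s - c\<bar> / r)\<bar>"
    unfolding hat_def by (rule max0_Lipschitz)
  also have "\<dots> = \<bar>\<bar>s - c\<bar> - \<bar>t - c\<bar>\<bar> / r"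
    using r_pos by (simp add: abs_divide flip: diff_divide_distrib)
  also have "\<dots> \<le> \<bar>t - s\<bar> / r"
    using r_pos by (intro divide_right_mono) auto
  finally show ?thesis .
qed

lemma y_abs_cont: "abs_cont_real y"
  unfolding abs_cont_real_def
proof (intro allI)
  fix lo hi
  show "abs_cont_on lo hi y"
  proof (rule abs_cont_on_dominated[OF abs_cont_on_integral_upto[OF w_integrable w_nonneg]])
    fix s t :: real assume "lo \<le> s" and "s \<le> t" and "t \<le> hi"
    have G_le: "G s \<le> G t"
      using monoD[OF integral_upto_mono[OF w_integrable w_nonneg] \<open>s \<le> t\<close>] .
    have "\<bar>y t - y s\<bar> = \<bar>(hat t - hat s) * exp (G t) + hat s * (exp (G t) - exp (G s))\<bar>"
      by (simp add: y_def algebra_simps)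
    also have "\<dots> \<le> \<bar>hat t - hat s\<bar> * exp (G t) + hat s * (exp (G t) - exp (G s))"
      using hat_bounds[of s] G_le by (simp add: abs_mult abs_triangle_ineq[THEN order_trans])
    also have "\<dots> \<le> (t - s) / r * exp 2 + 1 * (exp 2 * \<bar>G t - G s\<bar>)"
    proof (intro add_mono mult_mono)
      show "\<bar>hat t - hat s\<bar> \<le> (t - s) / r"
        using hat_Lipschitz[of t s] \<open>s \<le> t\<close> by simp
      have "exp (G t) - exp (G s) \<le> exp (G t) * (G t - G s)"
        by (rule exp_diff_le_exp_mult[OF G_le])
      also have "\<dots> \<le> exp 2 * \<bar>G t - G s\<bar>"
        using G_le exp_G_bounds(2)[of t] by (intro mult_mono) auto
      finally show "exp (G t) - exp (G s) \<le> exp 2 * \<bar>G t - G s\<bar>" .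
    qed (use exp_G_bounds hat_bounds G_le r_pos \<open>s \<le> t\<close> in auto)
    finally show "\<bar>y t - y s\<bar> \<le> exp 2 / r * (t - s) + exp 2 * \<bar>G t - G s\<bar>"
      by (simp add: mult.commute)
  qed (use r_pos in auto)
qed

lemma solves_equation_on_affine_piece:
  assumes U: "open U" "x \<in> U" "U \<subseteq> {c-r..c+r}"
    and y_eq: "\<And>t. t \<in> U \<Longrightarrow> y t = (\<alpha> + \<beta> * t) * exp (G t)"
    and G': "(G has_real_derivative w x) (at x)" and q: "0 \<le> q x"
    and f_eq: "f x = - \<beta> * exp (G x)"
  shows "\<exists>D. (y has_real_derivative D) (at x) \<and> - D + q x * y x = f x"
proof -
  let ?D = "\<beta> * exp (G x) + (\<alpha> + \<beta> * x) * (exp (G x) * w x)"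
  have "((\<lambda>t. (\<alpha> + \<beta> * t) * exp (G t)) has_real_derivative ?D) (at x)"
    by (auto intro!: derivative_eq_intros G')
  then have "(y has_real_derivative ?D) (at x)"
    by (rule has_field_derivative_transform_within_open[OF _ U(1,2)]) (simp add: y_eq)
  moreover have "w x = q x"
    using U q by (auto simp: w_def)
  ultimately show ?thesis
    using U(2) by (intro exI[of _ ?D]) (simp add: y_eq f_eq algebra_simps)
qed

lemma solves_equation_at:
  assumes G': "(G has_real_derivative w x) (at x)" and q: "0 \<le> q x" and x: "x \<notin> {c-r, c, c+r}"
  shows "\<exists>D. (y has_real_derivative D) (at x) \<and> - D + q x * y x = f x"
proof -
  have "r < \<bar>x - c\<bar> \<or> (c - r < x \<and> x < c) \<or> (c < x \<and> x < c + r)"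
    using x by (auto simp: abs_if)
  then consider "r < \<bar>x - c\<bar>" | "c - r < x" "x < c" | "c < x" "x < c + r"
    by blast
  then show ?thesis
  proof cases
    case 1
    have "((\<lambda>_. 0) has_real_derivative 0) (at x)"
      by simp
    then have "(y has_real_derivative 0) (at x)"
    proof (rule has_field_derivative_transform_within_open)
      show "open {t. r < \<bar>t - c\<bar>}"
        by (intro open_Collect_less continuous_intros)
    qed (use 1 hat_outside in \<open>auto simp: y_def\<close>)
    moreover have "f x = 0"
      using 1 by (auto simp: f_def abs_if split: split_indicator if_splits)
    moreover have "y x = 0"
      using 1 hat_outside by (simp add: y_def)
    ultimately show ?thesis by auto
  next
    case 2
    show ?thesis
    proof (rule solves_equation_on_affine_piece[of "{c-r<..<c}" _ "1 - c / r" "1 / r"])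
      show "y t = (1 - c / r + 1 / r * t) * exp (G t)" if "t \<in> {c-r<..<c}" for t
        using that r_pos by (simp add: y_def hat_def field_simps)
      show "f x = - (1 / r) * exp (G x)"
        using 2 by (simp add: f_def)
    qed (use 2 G' q in auto)
  next
    case 3
    show ?thesis
    proof (rule solves_equation_on_affine_piece[of "{c<..<c+r}" _ "1 + c / r" "- 1 / r"])
      show "y t = (1 + c / r + - 1 / r * t) * exp (G t)" if "t \<in> {c<..<c+r}" for t
        using that r_pos by (simp add: y_def hat_def field_simps)
      show "f x = - (- 1 / r) * exp (G x)"
        using 3 by (simp add: f_def)
    qed (use 3 G' q in auto)
  qed
qed

lemma y_solution: "is_solution q f y"
  unfolding is_solution_def
proof (intro conjI y_abs_cont)
  have "{c-r, c, c+r} \<in> null_sets lebesgue"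
    by (simp flip: negligible_iff_null_sets)
  from AE_not_in[OF this] integral_upto_has_real_derivative_AE[OF w_integrable] q_nonneg
  show "AE x in lebesgue. \<exists>D. (y has_real_derivative D) (at x) \<and> - D + q x * y x = f x"
    by eventually_elim (rule solves_equation_at)
qed

lemma y_measurable: "y \<in> borel_measurable lebesgue"
proof -
  have "y \<in> borel_measurable borel"
    unfolding y_def hat_def by measurable
  then show ?thesis by (simp add: measurable_completion)
qed

lemma f_measurable: "f \<in> borel_measurable lebesgue"
proof -
  have "f \<in> borel_measurable borel"
    unfolding f_def by measurable
  then show ?thesis by (simp add: measurable_completion)
qed

lemma f_bound: "\<bar>f x\<bar> \<le> exp 2 / r * indicator {c-r..c+r} x"
  using exp_G_bounds(2)[of x] r_pos
  by (auto simp: f_def abs_mult sgn_if divide_right_mono split: split_indicator)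

lemma y_bound: "\<bar>y x\<bar> \<le> exp 2 * indicator {c-r..c+r} x"
proof (cases "x \<in> {c-r..c+r}")
  case True
  have "\<bar>y x\<bar> \<le> 1 * exp 2"
    unfolding y_def abs_mult using hat_bounds exp_G_bounds by (intro mult_mono) auto
  with True show ?thesis by simp
next
  case False
  then have "r \<le> \<bar>x - c\<bar>" by auto
  with False show ?thesis using hat_outside[of x] by (simp add: y_def)
qed

lemma y_lower_bound: "x \<in> {c - r/2..c + r/2} \<Longrightarrow> 1 / 2 \<le> \<bar>y x\<bar>"
proof -
  assume "x \<in> {c - r/2..c + r/2}"
  then have "1 / 2 \<le> hat x"
    using r_pos by (auto simp: hat_def abs_if field_simps)
  then have "1 / 2 * 1 \<le> hat x * exp (G x)"
    using exp_G_bounds(1)[of x] by (intro mult_mono) auto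
  then show ?thesis by (simp add: y_def)
qed

lemma in_Lp_f: "0 < p \<Longrightarrow> in_Lp p f"
  using r_pos by (intro in_Lp_bounded_support[OF _ f_measurable _ _ f_bound]) auto

lemma in_Lp_y: "0 < p \<Longrightarrow> in_Lp p y"
  by (intro in_Lp_bounded_support[OF _ y_measurable _ _ y_bound]) auto

lemma radius_le_of_stability:
  assumes p: "1 \<le> p" and C: "0 < C" and bound: "Lp_norm p y \<le> C * Lp_norm p f"
  shows "r \<le> 4 * C * exp 2"
proof -
  have p0: "0 < p" using p by simp
  have "1 / 2 * r powr (1 / p) \<le> Lp_norm p y"
    using Lp_norm_ge_lower_bound[OF p0 in_Lp_y[OF p0], of "{c - r/2..c + r/2}" "1 / 2"]
      y_lower_bound r_pos by simp
  also have "\<dots> \<le> C * Lp_norm p f" by (rule bound)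
  also have "\<dots> \<le> C * (exp 2 / r * (2 * r) powr (1 / p))"
    using Lp_norm_le_bounded_support[OF p0 f_measurable _ _ f_bound] r_pos C
    by (intro mult_left_mono) auto
  also have "\<dots> = (C * exp 2 * 2 powr (1 / p) / r) * r powr (1 / p)"
    using r_pos by (simp add: powr_mult)
  finally have "1 / 2 \<le> C * exp 2 * 2 powr (1 / p) / r"
    by (rule mult_right_le_imp_le) (use r_pos in simp)
  then have "r \<le> 2 * (C * exp 2 * 2 powr (1 / p))"
    using r_pos by (simp add: field_simps)
  also have "\<dots> \<le> 2 * (C * exp 2 * 2 powr 1)"
    using p C by (intro mult_left_mono powr_mono) auto
  finally show ?thesis by simp
qed

end

theorem lemma2p3:
  fixes q :: "real \<Rightarrow> real" and p :: real
  assumes q_loc: "\<And>a b. set_integrable lebesgue {a..b} q"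
    and q_nonneg: "AE x in lebesgue. 0 \<le> q x"
    and p_ge: "1 \<le> p"
    and solv: "correctly_solvable q p"
  shows "bdd_above (range (d_fun q))"
proof (rule ccontr)
  assume unbounded: "\<not> bdd_above (range (d_fun q))"
  obtain C where "0 < C" and stable: "\<And>f y. in_Lp p f \<and> is_solution q f y \<and> in_Lp p y \<Longrightarrow>
      Lp_norm p y \<le> C * Lp_norm p f"
    using solv unfolding correctly_solvable_def by blast
  define r where "r = 4 * C * exp 2 + 1"
  have "0 < r" using \<open>0 < C\<close> by (simp add: r_def add_pos_pos)
  obtain x where "r < d_fun q x"
    using unbounded by (auto simp: bdd_above_def not_le)
  with q_loc \<open>0 < r\<close> have "(\<integral>t\<in>{x-r..x+r}. q t \<partial>lebesgue) \<le> 2"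
    by (rule set_integral_window_le_2)
  with q_loc q_nonneg \<open>0 < r\<close> interpret W: low_mass_window q x r
    by unfold_locales
  have "0 < p" using p_ge by simp
  then have "Lp_norm p W.y \<le> C * Lp_norm p W.f"
    using stable W.in_Lp_f W.y_solution W.in_Lp_y by blast
  with p_ge \<open>0 < C\<close> have "r \<le> 4 * C * exp 2"
    by (rule W.radius_le_of_stability)
  then show False by (simp add: r_def)
qed

end
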